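(* Let $a\neq0\neq\alpha$ with $a\alpha<0$, and let $\mathscr E^\tau$, $\ell_1(\tau,\mathbf a)$, $\ell_2(\tau,\mathbf a)$, $\tau_1(\mathbf a)$ be as in the context. (a) The function $\Delta(\tau)=\mathscr E^\tau(\ell_1(\tau,\mathbf a))-\mathscr E^\tau(\ell_2(\tau,\mathbf a))$, $\tau\in(0,\frac{\alpha^4}{72a^2}]$, is strictly decreasing, has a unique zero $\tau_0$, and is strictly positive for $\tau<\tau_0$. (b) For any $\mathbf a$ with $a\ne0\ne\alpha$ (either sign of $a\alpha$), the equation $\mathscr E^\tau(\ell_1(\tau,\mathbf a))-\tau=0$ has a unique solution $\tau\ge\tau_1(\mathbf a)$.
   Context: For $\mathbf a=(a,\alpha)$, $\tau>0$, $\ell>0$: $\mathscr E^\tau(\ell)=\frac{6a^2+6a\alpha\ell+2\alpha^2\ell^2}{\ell^3}+\tau\ell$. With $s=\mathrm{sign}(a\alpha)$: $\ell_1(\tau,\mathbf a)=\frac{1}{\sqrt{2\tau}}(s|\alpha|+\sqrt{\alpha^2+6|a|\sqrt{2\tau}})$ and, for $s=-1$ and $\tau\le\alpha^4/(72a^2)$, $\ell_2(\tau,\mathbf a)=\frac{1}{\sqrt{2\tau}}(|\alpha|+\sqrt{\alpha^2-6|a|\sqrt{2\tau}})$; these are local minimisers of $\mathscr E^\tau$. $\tau_1(\mathbf a)$ is the threshold such that $\ell_1(\tau,\mathbf a)\le1$ for all $\tau\ge\tau_1(\mathbf a)$. The quantity $\mathscr E^\tau(\ell_1(\tau,\mathbf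 a))-\tau$ equals $\Sigma^\varepsilon_f(h_{\ell_1})$ when $\tau=\tau(\varepsilon)$, where $h_\ell$ is the cubic minimiser on $[0,\ell)$ with data $(a,\alpha,0,0)$ extended by $0$ on $[\ell,1]$ and $\Sigma_f^\varepsilon(h)=\frac12\int_0^1\ddot h^2-\tau(\varepsilon)|\{h=0\}|$. *)

theory Defs
  imports Complex_Main
begin

definition Een :: "real \<Rightarrow> real \<Rightarrow> real \<Rightarrow> real \<Rightarrow> real" where
  "Een tau a al l = (6 * a^2 + 6 * a * al * l + 2 * al^2 * l^2) / l^3 + tau * l"

definition ell1 :: "real \<Rightarrow> real \<Rightarrow> real \<Rightarrow> real" where
  "ell1 tau a al = (sgn (a * al) * \<bar>al\<bar> + sqrt (al^2 + 6 * \<bar>a\<bar> * sqrt (2 * tau))) / sqrt (2 * tau)"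

definition ell2 :: "real \<Rightarrow> real \<Rightarrow> real \<Rightarrow> real" where
  "ell2 tau a al = (\<bar>al\<bar> + sqrt (al^2 - 6 * \<bar>a\<bar> * sqrt (2 * tau))) / sqrt (2 * tau)"

definition tau1 :: "real \<Rightarrow> real \<Rightarrow> real" where
  "tau1 a al = Inf {t. 0 < t \<and> (\<forall>tau\<ge>t. ell1 tau a al \<le> 1)}"

end

theory Submission
  imports Defs
begin

text \<open>Since \<open>Een tau a al l = Een 0 a al l + tau * l\<close>, a minimiser \<open>l(tau)\<close> of \<open>Een tau\<close> over a
  \<open>tau\<close>-independent set obeys the envelope inequality
  \<open>Een t (l t) \<le> Een s (l s) + (t - s) * l s\<close>. The minimising properties of \<open>ell1\<close> (where
  \<open>al*l + 3*a\<close> keeps a fixed sign) and of \<open>ell2\<close> (on \<open>l \<ge> 6|a|/|al|\<close>) follow from the sign of the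
  derivative \<open>tau - 2*(al*l + 3*a)^2/l^4\<close>, which is that of a quadratic whose larger root is the
  minimiser. As \<open>ell1 \<le> 3|a|/|al| < 6|a|/|al| \<le> ell2\<close>, the gap \<open>\<Delta>\<close> strictly decreases; it is positive
  at \<open>T/16\<close> and negative at \<open>T\<close>. Likewise \<open>Een tau (ell1 tau) - tau\<close> strictly decreases for
  \<open>tau \<ge> tau1\<close>, where \<open>ell1 < 1\<close>, is positive somewhere above \<open>tau1\<close> and eventually nonpositive.
  Both zeros then come from the intermediate value theorem.\<close>

lemma deriv_sign_change_imp_min:
  fixes f f' :: "real \<Rightarrow> real"
  assumes J: "connected J" "m \<in> J" "x \<in> J"
    and deriv: "\<And>y. y \<in> J \<Longrightarrow> (f has_real_derivative f' y) (at y)"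
    and left: "\<And>y. y \<in> J \<Longrightarrow> y \<le> m \<Longrightarrow> f' y \<le> 0"
    and right: "\<And>y. y \<in> J \<Longrightarrow> m \<le> y \<Longrightarrow> 0 \<le> f' y"
  shows "f m \<le> f x"
proof (cases "x \<le> m")
  case True
  have sub: "{x..m} \<subseteq> J" using connected_contains_Icc J by blast
  have "- f x \<le> - f m"
    by (rule deriv_nonneg_imp_mono[where g' = "\<lambda>y. - f' y"])
       (use True sub deriv left in \<open>auto intro!: derivative_eq_intros\<close>)
  then show ?thesis by simp
next
  case False
  have sub: "{m..x} \<subseteq> J" using connected_contains_Icc J by blast
  show ?thesis
    by (rule deriv_nonneg_imp_mono[where g' = f']) (use False sub deriv right in auto)
qed

lemma energy_deriv_factor:
  fixes tau y Y :: real
  assumes "0 \<le> tau" "0 < y"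
  shows "tau - 2*Y^2/y^4 = (sqrt (2*tau)*y^2 - 2*Y) * (sqrt (2*tau)*y^2 + 2*Y) / (2*y^4)"
proof -
  have "(sqrt (2*tau)*y^2 - 2*Y) * (sqrt (2*tau)*y^2 + 2*Y) = 2*tau*y^4 - 4*Y^2"
    using assms by (simp add: algebra_simps power2_eq_square power4_eq_xxxx)
  then show ?thesis using assms by (simp add: field_simps)
qed

lemma quadratic_factor:
  fixes r b c S y :: real
  assumes "0 < r" "S^2 = b^2 + 2*r*c"
  shows "r*y^2 - 2*(b*y + c) = (r*y - b - S) * (r*y - b + S) / r"
  using assms by (simp add: field_simps power2_eq_square)

lemma min_at_larger_root:
  fixes f :: "real \<Rightarrow> real" and tau b c S :: real
  defines "r \<equiv> sqrt (2*tau)"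
  assumes tau: "0 < tau" and S: "0 \<le> S" "S^2 = b^2 + 2*r*c"
    and J: "connected J" "(b + S)/r \<in> J" "x \<in> J"
    and dom: "\<And>y. y \<in> J \<Longrightarrow> 0 < y \<and> 0 \<le> b*y + c \<and> b - S \<le> r*y"
    and deriv: "\<And>y. y \<in> J \<Longrightarrow> (f has_real_derivative tau - 2*(b*y + c)^2/y^4) (at y)"
  shows "f ((b + S)/r) \<le> f x"
proof (rule deriv_sign_change_imp_min[OF J deriv])
  have r: "0 < r" using tau by (simp add: r_def)
  have sign: "tau - 2*(b*y + c)^2/y^4
      = (r*y - b - S) * (r*y - b + S) / r * (r*y^2 + 2*(b*y + c)) / (2*y^4)"
    if "y \<in> J" for y
    using energy_deriv_factor[of tau y "b*y + c"] quadratic_factor[OF r S(2), of y] tau dom[OF that]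
    by (simp add: r_def)
  fix y assume y: "y \<in> J"
  note d = dom[OF y]
  have pos: "0 \<le> (r*y - b + S) / r * (r*y^2 + 2*(b*y + c)) / (2*y^4)"
    using d r by (intro divide_nonneg_pos mult_nonneg_nonneg) auto
  show "tau - 2*(b*y + c)^2/y^4 \<le> 0" if "y \<le> (b + S)/r"
  proof -
    have "r*y - b - S \<le> 0" using that r by (simp add: field_simps)
    then show ?thesis
      unfolding sign[OF y] using mult_nonpos_nonneg[OF _ pos] by (simp add: mult.assoc times_divide_eq_right)
  qed
  show "0 \<le> tau - 2*(b*y + c)^2/y^4" if "(b + S)/r \<le> y"
  proof -
    have "0 \<le> r*y - b - S" using that r by (simp add: field_simps)
    then show ?thesis
      unfolding sign[OF y] using mult_nonneg_nonneg[OF _ pos] by (simp add: mult.assoc times_divide_eq_right)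
  qed
qed

lemma larger_root_le_1_iff:
  fixes r b c S :: real
  assumes r: "0 < r" and S: "S^2 = b^2 + 2*r*c" "b < S"
  shows "(b + S)/r \<le> 1 \<longleftrightarrow> 2*(b + c) \<le> r"
    and "(b + S)/r < 1 \<longleftrightarrow> 2*(b + c) < r"
proof -
  define P where "P = (r - b + S)/r"
  have q: "r - 2*(b + c) = (r - b - S) * P"
    using quadratic_factor[OF r S(1), of 1] by (simp add: P_def)
  have p: "0 < P" using r S(2) by (simp add: P_def)
  have "(b + S)/r \<le> 1 \<longleftrightarrow> 0 \<le> r - b - S" using r by (simp add: field_simps)
  also have "\<dots> \<longleftrightarrow> 0 \<le> r - 2*(b + c)" unfolding q using p by (simp add: zero_le_mult_iff)
  finally show "(b + S)/r \<le> 1 \<longleftrightarrow> 2*(b + c) \<le> r" by simp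
  have "(b + S)/r < 1 \<longleftrightarrow> 0 < r - b - S" using r by (simp add: field_simps)
  also have "\<dots> \<longleftrightarrow> 0 < r - 2*(b + c)" unfolding q using p by (simp add: zero_less_mult_iff)
  finally show "(b + S)/r < 1 \<longleftrightarrow> 2*(b + c) < r" by simp
qed

lemma sqrt_add_gt:
  fixes A B r :: real
  assumes "0 < A" "0 < B" "0 < r"
  shows "B < sqrt (B^2 + 6*A*r)"
  using assms by (simp add: real_less_rsqrt)

lemma sqrt_add_minus_bound:
  fixes A B r :: real
  assumes "0 < A" "0 < B" "0 < r"
  shows "B * (sqrt (B^2 + 6*A*r) - B) \<le> 3*A*r"
proof -
  have "B * sqrt (B^2 + 6*A*r) = sqrt (B^2 * (B^2 + 6*A*r))"
    using assms by (simp add: real_sqrt_mult)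
  also have "\<dots> \<le> sqrt ((B^2 + 3*A*r)^2)"
    using assms by (intro real_sqrt_le_mono) (simp add: power2_eq_square algebra_simps)
  also have "\<dots> = B^2 + 3*A*r" using assms by simp
  finally show ?thesis by (simp add: algebra_simps power2_eq_square)
qed

lemma sqrt_diff_bounds:
  fixes A B r :: real
  assumes "0 < A" "0 < B" "0 < r" "6*A*r \<le> B^2"
  shows "6*A/B \<le> (B + sqrt (B^2 - 6*A*r))/r"
    and "B - sqrt (B^2 - 6*A*r) \<le> r * (6*A/B)"
proof -
  define S where "S = sqrt (B^2 - 6*A*r)"
  have S: "0 \<le> S" "S^2 = B^2 - 6*A*r" using assms by (auto simp: S_def)
  have "S \<le> sqrt (B^2)" unfolding S_def using assms by (intro real_sqrt_le_mono) auto
  then have "S \<le> B" using assms by simp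
  have "6*A/B \<le> B/r" using assms by (simp add: field_simps power2_eq_square)
  also have "\<dots> \<le> (B + S)/r" using S(1) assms by (simp add: divide_right_mono)
  finally show "6*A/B \<le> (B + sqrt (B^2 - 6*A*r))/r" by (simp add: S_def)
  have "B*(B - S) \<le> (B + S)*(B - S)" using S \<open>S \<le> B\<close> by (intro mult_right_mono) auto
  also have "\<dots> = 6*A*r" using S by (simp add: algebra_simps power2_eq_square)
  finally show "B - sqrt (B^2 - 6*A*r) \<le> r * (6*A/B)"
    using assms by (simp add: S_def field_simps)
qed

lemma le_sqrt_iff_threshold:
  fixes c t :: real
  assumes "0 < t"
  shows "c \<le> sqrt (2*t) \<longleftrightarrow> (if c \<le> 0 then 0 else c^2/2) \<le> t"
    and "c < sqrt (2*t) \<longleftrightarrow> (if c \<le> 0 then 0 else c^2/2) < t"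
proof -
  have nonpos: "c < sqrt (2*t)" if "c \<le> 0"
    using that real_sqrt_gt_zero[of "2*t"] assms by linarith
  show "c \<le> sqrt (2*t) \<longleftrightarrow> (if c \<le> 0 then 0 else c^2/2) \<le> t"
    using nonpos real_sqrt_le_iff[of "c^2" "2*t"] assms by (cases "c \<le> 0") auto
  show "c < sqrt (2*t) \<longleftrightarrow> (if c \<le> 0 then 0 else c^2/2) < t"
    using nonpos real_sqrt_less_iff[of "c^2" "2*t"] assms by (cases "c \<le> 0") auto
qed

lemma envelope_bound:
  fixes F :: "real \<Rightarrow> real \<Rightarrow> real"
  assumes shift: "\<And>t s x. F t x = F s x + (t - s) * x" and min: "F t (x t) \<le> F t (x s)"
  shows "F t (x t) \<le> F s (x s) + (t - s) * x s"
  using min shift[of t "x s" s] by simp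

lemma envelope_gap_strict_decreasing:
  fixes F :: "real \<Rightarrow> real \<Rightarrow> real"
  assumes shift: "\<And>t s x. F t x = F s x + (t - s) * x"
    and min1: "F t2 (x1 t2) \<le> F t2 (x1 t1)" and min2: "F t1 (x2 t1) \<le> F t1 (x2 t2)"
    and sep: "x1 t1 < x2 t2" and t: "t1 < t2"
  shows "F t2 (x1 t2) - F t2 (x2 t2) < F t1 (x1 t1) - F t1 (x2 t1)"
proof -
  have "(t2 - t1) * x1 t1 < (t2 - t1) * x2 t2" using sep t by simp
  then show ?thesis
    using envelope_bound[OF shift min1] envelope_bound[OF shift min2] by (simp add: algebra_simps)
qed

lemma envelope_minus_id_strict_decreasing:
  fixes F :: "real \<Rightarrow> real \<Rightarrow> real"
  assumes shift: "\<And>t s x. F t x = F s x + (t - s) * x"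
    and min: "\<And>t s. t \<in> {t1..t2} \<Longrightarrow> s \<in> {t1..t2} \<Longrightarrow> F t (x t) \<le> F t (x s)"
    and le1: "x t1 \<le> 1" and less1: "\<And>t. t1 < t \<Longrightarrow> t \<le> t2 \<Longrightarrow> x t < 1"
    and t: "t1 < t2"
  shows "F t2 (x t2) - t2 < F t1 (x t1) - t1"
proof -
  \<comment> \<open>At the left end point only \<open>x t1 \<le> 1\<close> is known, so pass through the midpoint.\<close>
  define m where "m = (t1 + t2)/2"
  have m: "t1 < m" "m < t2" using t by (auto simp: m_def)
  have "F t2 (x t2) \<le> F m (x m) + (t2 - m) * x m"
    by (rule envelope_bound[OF shift min]) (use m in auto)
  moreover have "F m (x m) \<le> F t1 (x t1) + (m - t1) * x t1"
    by (rule envelope_bound[OF shift min]) (use m in auto)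
  moreover have "(t2 - m) * x m < t2 - m" using m less1[of m] by simp
  moreover have "(m - t1) * x t1 \<le> m - t1" using m le1 by (simp add: mult_left_le)
  ultimately show ?thesis by linarith
qed

lemma strict_decreasing_unique_zero:
  fixes g :: "real \<Rightarrow> real"
  assumes dec: "\<And>s t. s \<in> I \<Longrightarrow> t \<in> I \<Longrightarrow> s < t \<Longrightarrow> g t < g s"
    and sub: "{p..q} \<subseteq> I" and cont: "continuous_on {p..q} g"
    and sign: "0 \<le> g p" "g q \<le> 0" and pq: "p \<le> q"
  shows "\<exists>!t. t \<in> I \<and> g t = 0"
proof -
  obtain t where "p \<le> t" "t \<le> q" "g t = 0" using IVT2'[OF sign(2,1) pq cont] by blast
  then have t: "t \<in> I \<and> g t = 0" using sub by auto
  show ?thesis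
  proof (rule ex1I[of _ t])
    show "t \<in> I \<and> g t = 0" by (fact t)
    fix u assume "u \<in> I \<and> g u = 0"
    then show "u = t" using t dec by (metis less_irrefl linorder_neqE_linordered_idom)
  qed
qed

lemma Een_shift: "Een t a al x = Een s a al x + (t - s) * x"
  unfolding Een_def by (simp add: algebra_simps)

lemma Een_deriv:
  assumes "0 < l"
  shows "((\<lambda>l. Een tau a al l) has_real_derivative tau - 2*(al*l + 3*a)^2/l^4) (at l)"
proof -
  have "((\<lambda>l. Een tau a al l) has_real_derivative
     ((6*a*al + 2*al^2*(2*l)) * l^3 - (6*a^2 + 6*a*al*l + 2*al^2*l^2) * (3*l^2)) / (l^3)^2 + tau) (at l)"
    unfolding Een_def using assms by (auto intro!: derivative_eq_intros simp: power2_eq_square)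
  moreover have "((6*a*al + 2*al^2*(2*l)) * l^3 - (6*a^2 + 6*a*al*l + 2*al^2*l^2) * (3*l^2)) / (l^3)^2 + tau
     = tau - 2*(al*l + 3*a)^2/l^4"
    using assms by (simp add: field_simps power2_eq_square) (simp add: algebra_simps eval_nat_numeral)
  ultimately show ?thesis by simp
qed

lemma Een_abs_form:
  "a*al < 0 \<Longrightarrow> Een t a al x = (6*\<bar>a\<bar>^2 - 6*\<bar>a\<bar>*\<bar>al\<bar>*x + 2*\<bar>al\<bar>^2*x^2)/x^3 + t*x"
  unfolding Een_def by (cases "0 < a"; cases "0 < al") (auto simp: mult_less_0_iff)

lemma continuous_on_Een:
  assumes "continuous_on S l" "\<And>t. t \<in> S \<Longrightarrow> l t \<noteq> 0"
  shows "continuous_on S (\<lambda>t. Een t a al (l t))"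
  unfolding Een_def using assms by (intro continuous_intros) auto

lemma continuous_on_ell1: "continuous_on {0<..} (\<lambda>t. ell1 t a al)"
  unfolding ell1_def by (intro continuous_intros) auto

lemma continuous_on_ell2: "continuous_on {0<..} (\<lambda>t. ell2 t a al)"
  unfolding ell2_def by (intro continuous_intros) auto

text \<open>On this set \<open>al*x + 3*a\<close> does not change sign, and \<open>ell1\<close> minimises \<open>Een\<close> over it.\<close>
definition ell1_domain :: "real \<Rightarrow> real \<Rightarrow> real set" where
  "ell1_domain a al = (if 0 < a*al then {0<..} else {0<..3*\<bar>a\<bar>/\<bar>al\<bar>})"

lemma ell1_root_data:
  assumes "a \<noteq> 0" "al \<noteq> 0" "0 < t"
  defines "b \<equiv> sgn (a*al) * \<bar>al\<bar>" and "S \<equiv> sqrt (al^2 + 6*\<bar>a\<bar>*sqrt (2*t))"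
  shows "ell1 t a al = (b + S)/sqrt (2*t)" and "S^2 = b^2 + 2*sqrt (2*t)*(3*\<bar>a\<bar>)"
    and "\<bar>b\<bar> = \<bar>al\<bar>" and "\<bar>al\<bar> < S"
proof -
  show "ell1 t a al = (b + S)/sqrt (2*t)" by (simp add: ell1_def b_def S_def)
  show b: "\<bar>b\<bar> = \<bar>al\<bar>" using assms by (simp add: b_def abs_mult abs_sgn_eq)
  have "b^2 = al^2" by (metis b power2_abs)
  then show "S^2 = b^2 + 2*sqrt (2*t)*(3*\<bar>a\<bar>)" using assms by (simp add: S_def)
  show "\<bar>al\<bar> < S"
    using sqrt_add_gt[of "\<bar>a\<bar>" "\<bar>al\<bar>" "sqrt (2*t)"] assms by (simp add: S_def)
qed

lemma ell1_in_domain: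
  assumes a: "a \<noteq> 0" "al \<noteq> 0" and t: "0 < t"
  shows "ell1 t a al \<in> ell1_domain a al"
proof -
  define r where "r = sqrt (2*t)"
  define S where "S = sqrt (al^2 + 6*\<bar>a\<bar>*r)"
  have r: "0 < r" using t by (simp add: r_def)
  note root = ell1_root_data[OF a t, folded r_def, folded S_def]
  show ?thesis
  proof (cases "0 < a*al")
    case True
    then show ?thesis using root r by (simp add: ell1_domain_def)
  next
    case False
    with a have "a*al < 0" by (simp add: linorder_not_less order_le_less)
    then have l: "ell1 t a al = (S - \<bar>al\<bar>)/r" using root(1) by simp
    have "\<bar>al\<bar> * (S - \<bar>al\<bar>) \<le> 3*\<bar>a\<bar>*r"
      unfolding S_def using sqrt_add_minus_bound[of "\<bar>a\<bar>" "\<bar>al\<bar>" r] a r by simp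
    then have "(S - \<bar>al\<bar>)/r \<le> 3*\<bar>a\<bar>/\<bar>al\<bar>" using a r by (simp add: field_simps)
    then show ?thesis using False l root(4) r by (simp add: ell1_domain_def)
  qed
qed

lemma ell1_pos: "a \<noteq> 0 \<Longrightarrow> al \<noteq> 0 \<Longrightarrow> 0 < t \<Longrightarrow> 0 < ell1 t a al"
  using ell1_in_domain[of a al t] by (auto simp: ell1_domain_def split: if_splits)

lemma Een_ell1_min:
  assumes a: "a \<noteq> 0" "al \<noteq> 0" and t: "0 < t" and x: "x \<in> ell1_domain a al"
  shows "Een t a al (ell1 t a al) \<le> Een t a al x"
proof -
  define b where "b = sgn (a*al) * \<bar>al\<bar>"
  define r where "r = sqrt (2*t)"
  define S where "S = sqrt (al^2 + 6*\<bar>a\<bar>*r)"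
  have r: "0 < r" using t by (simp add: r_def)
  note root = ell1_root_data[OF a t, folded b_def r_def, folded S_def]
  have dom: "0 < y \<and> 0 \<le> b*y + 3*\<bar>a\<bar> \<and> b - S \<le> r*y" if "y \<in> ell1_domain a al" for y
  proof -
    have y: "0 < y" "0 < a*al \<or> \<bar>al\<bar>*y \<le> 3*\<bar>a\<bar>"
      using that a by (auto simp: ell1_domain_def split: if_splits simp: field_simps)
    have "0 \<le> b*y + 3*\<bar>a\<bar>" using y by (auto simp: b_def sgn_if)
    moreover have "b - S \<le> r*y" using root(3,4) mult_pos_pos[OF r y(1)] by linarith
    ultimately show ?thesis using y by simp
  qed
  have sq: "(al*y + 3*a)^2 = (b*y + 3*\<bar>a\<bar>)^2" for y
    using a by (cases "0 < a"; cases "0 < al") (auto simp: b_def sgn_mult power2_eq_square algebra_simps)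
  have deriv: "(Een t a al has_real_derivative t - 2*(b*y + 3*\<bar>a\<bar>)^2/y^4) (at y)"
    if "y \<in> ell1_domain a al" for y
    using Een_deriv[of y t a al] dom[OF that] by (simp add: sq)
  have "0 \<le> S" using r by (simp add: S_def)
  moreover have "connected (ell1_domain a al)" by (simp add: ell1_domain_def)
  ultimately show ?thesis
    unfolding root(1) r_def
    by (rule min_at_larger_root[OF t _ root(2)[unfolded r_def]])
       (use ell1_in_domain[OF a t] x dom deriv in \<open>simp_all add: root(1) r_def S_def\<close>)
qed

lemma Een_lower_bound:
  assumes aal: "a*al < 0" and t: "0 \<le> t" and x: "x \<in> ell1_domain a al"
  shows "2*\<bar>al\<bar>^3/(9*\<bar>a\<bar>) \<le> Een t a al x"
proof -
  define A where "A = \<bar>a\<bar>"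
  define B where "B = \<bar>al\<bar>"
  have A: "0 < A" and B: "0 < B" using aal by (auto simp: A_def B_def)
  have x: "0 < x" "B*x \<le> 3*A"
    using x aal A B by (auto simp: ell1_domain_def A_def B_def field_simps)
  have "2*B^3*x^3 \<le> 9*A*(6*A^2 - 6*A*B*x + 2*B^2*x^2)"
  proof -
    have "0 \<le> 2*(3*A - B*x)^3" using x by simp
    also have "2*(3*A - B*x)^3 = 9*A*(6*A^2 - 6*A*B*x + 2*B^2*x^2) - 2*B^3*x^3"
      by (simp add: power3_eq_cube power2_eq_square algebra_simps)
    finally show ?thesis by simp
  qed
  then have "2*B^3/(9*A) \<le> (6*A^2 - 6*A*B*x + 2*B^2*x^2)/x^3" using A x by (simp add: field_simps)
  moreover have "0 \<le> t*x" using t x by simp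
  ultimately show ?thesis unfolding Een_abs_form[OF aal] A_def B_def by linarith
qed

lemma sqrt_2tau_bound:
  assumes "a \<noteq> 0" "0 \<le> tau" "tau \<le> al^4/(72*a^2)"
  shows "6*\<bar>a\<bar>*sqrt (2*tau) \<le> al^2"
proof -
  have "72*a^2*tau \<le> al^4" using assms by (simp add: field_simps)
  moreover have "(6*\<bar>a\<bar>*sqrt (2*tau))^2 = 72*a^2*tau" using assms by (simp add: power_mult_distrib)
  ultimately have "(6*\<bar>a\<bar>*sqrt (2*tau))^2 \<le> (al^2)^2" by (simp flip: power_mult)
  then show ?thesis by (rule power2_le_imp_le) simp
qed

lemma ell2_ge:
  assumes a: "a \<noteq> 0" "al \<noteq> 0" and t: "0 < t" "t \<le> al^4/(72*a^2)"
  shows "6*\<bar>a\<bar>/\<bar>al\<bar> \<le> ell2 t a al"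
  using sqrt_diff_bounds(1)[of "\<bar>a\<bar>" "\<bar>al\<bar>" "sqrt (2*t)"] sqrt_2tau_bound[OF a(1) _ t(2)] a t
  by (simp add: ell2_def)

lemma Een_ell2_min:
  assumes aal: "a*al < 0" and t: "0 < t" "t \<le> al^4/(72*a^2)" and x: "6*\<bar>a\<bar>/\<bar>al\<bar> \<le> x"
  shows "Een t a al (ell2 t a al) \<le> Een t a al x"
proof -
  have a: "a \<noteq> 0" "al \<noteq> 0" using aal by auto
  define r where "r = sqrt (2*t)"
  define S where "S = sqrt (\<bar>al\<bar>^2 - 6*\<bar>a\<bar>*r)"
  have r: "0 < r" using t by (simp add: r_def)
  have disc: "6*\<bar>a\<bar>*r \<le> \<bar>al\<bar>^2" using sqrt_2tau_bound[OF a(1) _ t(2)] t by (simp add: r_def)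
  have S: "0 \<le> S" "S^2 = \<bar>al\<bar>^2 + 2*r*(- 3*\<bar>a\<bar>)" using disc by (auto simp: S_def)
  have ell2: "ell2 t a al = (\<bar>al\<bar> + S)/r" by (simp add: ell2_def S_def r_def)
  have dom: "0 < y \<and> 0 \<le> \<bar>al\<bar>*y + - 3*\<bar>a\<bar> \<and> \<bar>al\<bar> - S \<le> r*y" if "y \<in> {6*\<bar>a\<bar>/\<bar>al\<bar>..}" for y
  proof -
    have y: "6*\<bar>a\<bar>/\<bar>al\<bar> \<le> y" using that by simp
    have "0 < y" using order_less_le_trans[OF _ y] a by simp
    moreover have "6*\<bar>a\<bar> \<le> \<bar>al\<bar>*y" using y a by (simp add: field_simps)
    moreover have "\<bar>al\<bar> - S \<le> r*y"
      using sqrt_diff_bounds(2)[of "\<bar>a\<bar>" "\<bar>al\<bar>" r] a r disc y mult_left_mono[OF y, of r]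
      by (simp add: S_def)
    ultimately show ?thesis using y a by auto
  qed
  have sq: "(al*y + 3*a)^2 = (\<bar>al\<bar>*y + - 3*\<bar>a\<bar>)^2" for y
    using aal by (cases "0 < a"; cases "0 < al") (auto simp: mult_less_0_iff power2_eq_square algebra_simps)
  have deriv: "(Een t a al has_real_derivative t - 2*(\<bar>al\<bar>*y + - 3*\<bar>a\<bar>)^2/y^4) (at y)"
    if "y \<in> {6*\<bar>a\<bar>/\<bar>al\<bar>..}" for y
    using Een_deriv[of y t a al] dom[OF that] by (simp add: sq)
  show ?thesis
    unfolding ell2 r_def
    by (rule min_at_larger_root[where J = "{6*\<bar>a\<bar>/\<bar>al\<bar>..}", OF t(1) S(1) S(2)[unfolded r_def]])
       (use ell2_ge[OF a t] x dom deriv in \<open>simp_all add: ell2 r_def\<close>)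
qed

lemma Een_gap_strict_decreasing:
  assumes aal: "a*al < 0" and t: "0 < t1" "t1 < t2" "t2 \<le> al^4/(72*a^2)"
  shows "Een t2 a al (ell1 t2 a al) - Een t2 a al (ell2 t2 a al)
       < Een t1 a al (ell1 t1 a al) - Een t1 a al (ell2 t1 a al)"
proof (rule envelope_gap_strict_decreasing[where F = "\<lambda>t x. Een t a al x", OF Een_shift])
  have a: "a \<noteq> 0" "al \<noteq> 0" using aal by auto
  have t2: "0 < t2" using t by simp
  have d1: "ell1 t1 a al \<in> ell1_domain a al" by (rule ell1_in_domain[OF a t(1)])
  have l2: "6*\<bar>a\<bar>/\<bar>al\<bar> \<le> ell2 t2 a al" by (rule ell2_ge[OF a t2 t(3)])
  show "Een t2 a al (ell1 t2 a al) \<le> Een t2 a al (ell1 t1 a al)" by (rule Een_ell1_min[OF a t2 d1])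
  show "Een t1 a al (ell2 t1 a al) \<le> Een t1 a al (ell2 t2 a al)"
    by (rule Een_ell2_min[OF aal t(1) _ l2]) (use t in auto)
  have "ell1 t1 a al \<le> 3*\<bar>a\<bar>/\<bar>al\<bar>" using d1 aal by (simp add: ell1_domain_def)
  also have "\<dots> < 6*\<bar>a\<bar>/\<bar>al\<bar>" using a by (simp add: divide_strict_right_mono)
  finally show "ell1 t1 a al < ell2 t2 a al" using l2 by linarith
  show "t1 < t2" by (fact t(2))
qed

lemma Een_gap_at_top_neg:
  assumes aal: "a*al < 0" and T: "T = al^4/(72*a^2)"
  shows "Een T a al (ell1 T a al) - Een T a al (ell2 T a al) < 0"
proof -
  have a: "a \<noteq> 0" "al \<noteq> 0" using aal by auto
  define A where "A = \<bar>a\<bar>"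
  define B where "B = \<bar>al\<bar>"
  have A: "0 < A" and B: "0 < B" using a by (auto simp: A_def B_def)
  have T': "T = B^4/(72*A^2)" unfolding T A_def B_def by (simp add: power_abs[symmetric] del: power_abs)
  have Tp: "0 < T" using T' A B by simp
  have "2*T = (B^2/(6*A))^2" using A unfolding T' by (simp add: power2_eq_square field_simps eval_nat_numeral)
  then have r: "sqrt (2*T) = B^2/(6*A)" using A by simp
  have "ell2 T a al = (B + sqrt (B^2 - 6*A*(B^2/(6*A))))/(B^2/(6*A))"
    unfolding ell2_def r A_def B_def by simp
  also have "\<dots> = 6*A/B" using A B by (simp add: field_simps power2_eq_square)
  finally have l2: "ell2 T a al = 6*A/B" .
  have "3*A/B \<in> ell1_domain a al" using aal A B by (simp add: ell1_domain_def A_def B_def)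
  then have "Een T a al (ell1 T a al) \<le> Een T a al (3*A/B)" by (rule Een_ell1_min[OF a Tp])
  moreover have "Een T a al (3*A/B) - Een T a al (6*A/B) = - (B^3/(72*A))"
    unfolding Een_abs_form[OF aal] A_def[symmetric] B_def[symmetric] T' using A B
    by (simp add: field_simps power2_eq_square eval_nat_numeral)
  moreover have "0 < B^3/(72*A)" using A B by simp
  ultimately show ?thesis unfolding l2 by linarith
qed

lemma Een_gap_small_pos:
  assumes aal: "a*al < 0" and T: "T = al^4/(72*a^2)"
  shows "0 < Een (T/16) a al (ell1 (T/16) a al) - Een (T/16) a al (ell2 (T/16) a al)"
proof -
  have a: "a \<noteq> 0" "al \<noteq> 0" using aal by auto
  define A where "A = \<bar>a\<bar>"
  define B where "B = \<bar>al\<bar>"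
  have A: "0 < A" and B: "0 < B" using a by (auto simp: A_def B_def)
  have T': "T = B^4/(72*A^2)" unfolding T A_def B_def by (simp add: power_abs[symmetric] del: power_abs)
  have Tp: "0 < T/16" using T' A B by simp
  then have "T/16 \<le> al^4/(72*a^2)" using T by linarith
  have "2*B^3/(9*A) \<le> Een (T/16) a al (ell1 (T/16) a al)"
    using Een_lower_bound[OF aal _ ell1_in_domain[OF a Tp]] Tp by (simp add: A_def B_def)
  moreover have "Een (T/16) a al (ell2 (T/16) a al) \<le> Een (T/16) a al (24*A/B)"
    by (rule Een_ell2_min[OF aal Tp]) (use \<open>T/16 \<le> al^4/(72*a^2)\<close> A B in \<open>simp_all add: A_def B_def divide_right_mono\<close>)
  moreover have "Een (T/16) a al (24*A/B) = 1302/13824 * (B^3/A)"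
    unfolding Een_abs_form[OF aal] A_def[symmetric] B_def[symmetric] T' using A B
    by (simp add: field_simps power2_eq_square eval_nat_numeral)
  moreover have "1302/13824 * (B^3/A) < 2*B^3/(9*A)" using A B by (simp add: field_simps)
  ultimately show ?thesis by linarith
qed

lemma Een_gap_unique_zero:
  assumes aal: "a*al < 0"
  defines "T \<equiv> al^4/(72*a^2)"
    and "D \<equiv> \<lambda>tau. Een tau a al (ell1 tau a al) - Een tau a al (ell2 tau a al)"
  shows "(\<forall>t1 t2. 0 < t1 \<and> t1 < t2 \<and> t2 \<le> T \<longrightarrow> D t2 < D t1) \<and>
         (\<exists>!t0. 0 < t0 \<and> t0 \<le> T \<and> D t0 = 0) \<and>
         (\<forall>t0. 0 < t0 \<and> t0 \<le> T \<and> D t0 = 0 \<longrightarrow> (\<forall>tau. 0 < tau \<and> tau < t0 \<longrightarrow> D tau > 0))"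
proof -
  have a: "a \<noteq> 0" "al \<noteq> 0" using aal by auto
  have Tp: "0 < T" using a by (simp add: T_def)
  have dec: "D t2 < D t1" if "0 < t1" "t1 < t2" "t2 \<le> T" for t1 t2
    using Een_gap_strict_decreasing[OF aal that[unfolded T_def]] by (simp add: D_def)
  have ell2_pos: "0 < ell2 t a al" if "t \<in> {T/16..T}" for t
  proof -
    have "0 < t" "t \<le> al^4/(72*a^2)" using that Tp by (auto simp: T_def)
    then show ?thesis using order_less_le_trans[OF _ ell2_ge[OF a]] a by simp
  qed
  have "continuous_on {T/16..T} D"
    unfolding D_def using Tp ell1_pos[OF a] ell2_pos
    by (intro continuous_intros continuous_on_Een
          continuous_on_subset[OF continuous_on_ell1] continuous_on_subset[OF continuous_on_ell2])
       (auto simp: less_imp_neq[symmetric])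
  moreover have "D T < 0" unfolding D_def T_def by (rule Een_gap_at_top_neg[OF aal refl])
  moreover have "0 < D (T/16)" unfolding D_def T_def by (rule Een_gap_small_pos[OF aal refl])
  ultimately have "\<exists>!t. t \<in> {0<..T} \<and> D t = 0"
    using Tp by (intro strict_decreasing_unique_zero[where p = "T/16" and q = T]) (auto simp: dec)
  then have "\<exists>!t0. 0 < t0 \<and> t0 \<le> T \<and> D t0 = 0" by simp
  moreover have "0 < D tau" if "0 < t0" "t0 \<le> T" "D t0 = 0" "0 < tau" "tau < t0" for t0 tau
    using dec[of tau t0] that by simp
  ultimately show ?thesis using dec by blast
qed

definition ell1_crit :: "real \<Rightarrow> real \<Rightarrow> real" where
  "ell1_crit a al = 2*(sgn (a*al)*\<bar>al\<bar> + 3*\<bar>a\<bar>)"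

lemma ell1_le_1_iff_crit:
  assumes a: "a \<noteq> 0" "al \<noteq> 0" and t: "0 < t"
  shows "ell1 t a al \<le> 1 \<longleftrightarrow> ell1_crit a al \<le> sqrt (2*t)"
    and "ell1 t a al < 1 \<longleftrightarrow> ell1_crit a al < sqrt (2*t)"
proof -
  note root = ell1_root_data[OF a t]
  have "sgn (a*al) * \<bar>al\<bar> < sqrt (al^2 + 6*\<bar>a\<bar>*sqrt (2*t))"
    using root(3,4) by linarith
  note iff = larger_root_le_1_iff[OF _ root(2) this]
  show "ell1 t a al \<le> 1 \<longleftrightarrow> ell1_crit a al \<le> sqrt (2*t)"
    unfolding root(1) ell1_crit_def using iff(1) t by simp
  show "ell1 t a al < 1 \<longleftrightarrow> ell1_crit a al < sqrt (2*t)"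
    unfolding root(1) ell1_crit_def using iff(2) t by simp
qed

lemma tau1_eq:
  assumes a: "a \<noteq> 0" "al \<noteq> 0"
  shows "tau1 a al = (if ell1_crit a al \<le> 0 then 0 else (ell1_crit a al)^2/2)"
proof -
  define \<theta> where "\<theta> = (if ell1_crit a al \<le> 0 then 0 else (ell1_crit a al)^2/2)"
  have iff: "ell1 t a al \<le> 1 \<longleftrightarrow> \<theta> \<le> t" if "0 < t" for t
    using ell1_le_1_iff_crit(1)[OF a that] le_sqrt_iff_threshold(1)[OF that] by (simp add: \<theta>_def)
  have "{t. 0 < t \<and> (\<forall>tau\<ge>t. ell1 tau a al \<le> 1)} = {t. 0 < t \<and> \<theta> \<le> t}"
    using iff by (auto intro: order_trans)
  also have "\<dots> = (if \<theta> = 0 then {0<..} else {\<theta>..})"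
  proof -
    have "0 \<le> \<theta>" by (simp add: \<theta>_def)
    then show ?thesis by (auto simp: order_le_less)
  qed
  finally show ?thesis unfolding tau1_def \<theta>_def[symmetric] by simp
qed

lemma ell1_le_1_iff:
  assumes "a \<noteq> 0" "al \<noteq> 0" "0 < t"
  shows "ell1 t a al \<le> 1 \<longleftrightarrow> tau1 a al \<le> t"
  using ell1_le_1_iff_crit(1)[OF assms] le_sqrt_iff_threshold(1)[OF assms(3)] tau1_eq[OF assms(1,2)]
  by simp

lemma ell1_less_1_iff:
  assumes "a \<noteq> 0" "al \<noteq> 0" "0 < t"
  shows "ell1 t a al < 1 \<longleftrightarrow> tau1 a al < t"
  using ell1_le_1_iff_crit(2)[OF assms] le_sqrt_iff_threshold(2)[OF assms(3)] tau1_eq[OF assms(1,2)]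
  by simp

lemma Een_ell1_minus_strict_decreasing:
  assumes a: "a \<noteq> 0" "al \<noteq> 0" and t: "0 < t1" "tau1 a al \<le> t1" "t1 < t2"
  shows "Een t2 a al (ell1 t2 a al) - t2 < Een t1 a al (ell1 t1 a al) - t1"
proof (rule envelope_minus_id_strict_decreasing[where F = "\<lambda>t x. Een t a al x", OF Een_shift])
  show "Een t a al (ell1 t a al) \<le> Een t a al (ell1 s a al)" if "t \<in> {t1..t2}" "s \<in> {t1..t2}" for t s
    using that t by (intro Een_ell1_min[OF a] ell1_in_domain[OF a]) auto
  show "ell1 t1 a al \<le> 1" using ell1_le_1_iff[OF a t(1)] t(2) by simp
  show "ell1 t a al < 1" if "t1 < t" "t \<le> t2" for t
    using ell1_less_1_iff[OF a, of t] that t by simp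
qed (fact t(3))

lemma continuous_on_Een_ell1:
  assumes "a \<noteq> 0" "al \<noteq> 0" "0 < p"
  shows "continuous_on {p..q} (\<lambda>t. Een t a al (ell1 t a al))"
  using assms ell1_pos[OF assms(1,2)]
  by (intro continuous_on_Een continuous_on_subset[OF continuous_on_ell1])
     (auto simp: less_imp_neq[symmetric])

lemma Een_ell1_minus_pos:
  assumes a: "a \<noteq> 0" "al \<noteq> 0"
  shows "\<exists>t. 0 < t \<and> tau1 a al \<le> t \<and> 0 < Een t a al (ell1 t a al) - t"
proof (cases "ell1_crit a al \<le> 0")
  case False
  define t where "t = tau1 a al"
  have t: "0 < t" unfolding t_def tau1_eq[OF a] using False by simp
  have "ell1 t a al = 1"
    using ell1_le_1_iff[OF a t] ell1_less_1_iff[OF a t] unfolding t_def by linarith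
  then have "Een t a al (ell1 t a al) - t = 6*(a + al/2)^2 + al^2/2"
    by (simp add: Een_def power2_eq_square algebra_simps)
  also have "0 < \<dots>" using a by (simp add: add_nonneg_pos)
  finally show ?thesis using t by (auto simp: t_def)
next
  case True
  have aal: "a*al < 0"
  proof (rule ccontr)
    assume "\<not> a*al < 0"
    then have "0 < a*al" using a by (simp add: linorder_not_less order_le_less)
    then show False using True a by (simp add: ell1_crit_def)
  qed
  define t where "t = \<bar>al\<bar>^3/(9*\<bar>a\<bar>)"
  have t: "0 < t" using a by (simp add: t_def)
  have "2*\<bar>al\<bar>^3/(9*\<bar>a\<bar>) \<le> Een t a al (ell1 t a al)"
    using Een_lower_bound[OF aal _ ell1_in_domain[OF a t]] t by simp
  moreover have "t < 2*\<bar>al\<bar>^3/(9*\<bar>a\<bar>)" using a by (simp add: t_def field_simps)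
  moreover have "tau1 a al = 0" using tau1_eq[OF a] True by simp
  ultimately show ?thesis using t by (intro exI[of _ t]) simp
qed

lemma Een_ell1_minus_eventually_nonpos:
  assumes a: "a \<noteq> 0" "al \<noteq> 0" and t: "0 < t"
  shows "\<exists>u. t \<le> u \<and> Een u a al (ell1 u a al) - u \<le> 0"
proof -
  \<comment> \<open>At a fixed \<open>x0 \<le> 1/2\<close> the term \<open>tau*x0\<close> grows only half as fast as \<open>tau\<close>.\<close>
  define x0 where "x0 = min (1/2) (3*\<bar>a\<bar>/\<bar>al\<bar>)"
  have x0: "x0 \<in> ell1_domain a al" "x0 \<le> 1/2" "0 < x0"
    using a by (auto simp: x0_def ell1_domain_def)
  define K where "K = Een 0 a al x0"
  define u where "u = t + 2*\<bar>K\<bar> + 1"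
  have u: "0 < u" "t \<le> u" using t by (auto simp: u_def)
  have "Een u a al (ell1 u a al) \<le> Een u a al x0" by (rule Een_ell1_min[OF a u(1) x0(1)])
  also have "\<dots> = K + u*x0" using Een_shift[of u a al x0 0] by (simp add: K_def)
  also have "\<dots> \<le> K + u/2" using x0 u by simp
  finally have "Een u a al (ell1 u a al) - u \<le> K - u/2" by simp
  also have "\<dots> \<le> 0" using t by (simp add: u_def)
  finally show ?thesis using u by blast
qed

lemma Een_ell1_minus_unique_zero:
  assumes a: "a \<noteq> 0" "al \<noteq> 0"
  shows "\<exists>!tau. 0 < tau \<and> tau1 a al \<le> tau \<and> Een tau a al (ell1 tau a al) - tau = 0"
proof -
  obtain p where p: "0 < p" "tau1 a al \<le> p" "0 < Een p a al (ell1 p a al) - p"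
    using Een_ell1_minus_pos[OF a] by blast
  obtain q where q: "p \<le> q" "Een q a al (ell1 q a al) - q \<le> 0"
    using Een_ell1_minus_eventually_nonpos[OF a p(1)] by blast
  have "\<exists>!tau. tau \<in> {t. 0 < t \<and> tau1 a al \<le> t} \<and> Een tau a al (ell1 tau a al) - tau = 0"
    using p q Een_ell1_minus_strict_decreasing[OF a]
    by (intro strict_decreasing_unique_zero[where p = p and q = q]
          continuous_intros continuous_on_Een_ell1[OF a]) auto
  then show ?thesis by simp
qed

theorem lemma2p7:
  fixes a al :: real
  shows
   "(a \<noteq> 0 \<and> al \<noteq> 0 \<and> a * al < 0 \<longrightarrow>
      (let T = al^4 / (72 * a^2);
           \<Delta> = (\<lambda>tau. Een tau a al (ell1 tau a al) - Een tau a al (ell2 tau a al))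
       in (\<forall>t1 t2. 0 < t1 \<and> t1 < t2 \<and> t2 \<le> T \<longrightarrow> \<Delta> t2 < \<Delta> t1) \<and>
          (\<exists>!t0. 0 < t0 \<and> t0 \<le> T \<and> \<Delta> t0 = 0) \<and>
          (\<forall>t0. 0 < t0 \<and> t0 \<le> T \<and> \<Delta> t0 = 0 \<longrightarrow> (\<forall>tau. 0 < tau \<and> tau < t0 \<longrightarrow> \<Delta> tau > 0))))
    \<and>
    (a \<noteq> 0 \<and> al \<noteq> 0 \<longrightarrow>
      (\<exists>!tau. 0 < tau \<and> tau1 a al \<le> tau \<and> Een tau a al (ell1 tau a al) - tau = 0))"
  unfolding Let_def
  by (intro conjI[OF impI impI] Een_gap_unique_zero Een_ell1_minus_unique_zero) simp_all

end
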